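(* Let $K,L$ be fields, let $n\ge m\ge 1$ be integers, and let $\sigma_1,\ldots,\sigma_n,\tau_1,\ldots,\tau_m\colon K\to L$ be field homomorphisms such that $\prod_{i=1}^n \sigma_i(a)=\prod_{j=1}^m \tau_j(a)$ for all $a\in K$. Then one of the following holds: (1) $n=m$ and there is a permutation $g\in S_n$ with $\tau_i=\sigma_{g(i)}$ for $1\le i\le n$; (2) $\operatorname{char}K=\operatorname{char}L=p>0$, and there are indices $1\le i_1<i_2<\cdots<i_p\le n$ with $\sigma_{i_1}=\sigma_{i_2}=\cdots=\sigma_{i_p}$. Moreover, for every $1\le j\le m$ there exist an integer $l$ with $-(m-1)\le l(p-1)\le n-1$ and an index $1\le i\le n$ with $\tau_j=\sigma_i\mathbf{p}^l$; and for every $1\le i\le n$ there exist an integer $l$ with $-(n-1)\le l(p-1)\le m-1$ and an index $1\le j\le m$ with $\sigma_i=\tau_j\mathbf{p}^l$.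
   Context: $\mathbf{p}$ denotes the Frobenius endomorphism $x\mapsto x^p$ of $L$. For field homomorphisms $\sigma,\tau\colon K\to L$ and an integer $l$, the equation $\tau=\sigma\mathbf{p}^l$ means: if $l\ge 0$, $\tau(a)=\sigma(a)^{p^l}$ for all $a\in K$; if $l<0$, $\tau(a)^{p^{-l}}=\sigma(a)$ for all $a\in K$ (i.e. $\sigma=\tau\mathbf{p}^{-l}$). *)

theory Defs
  imports Main "HOL-Combinatorics.Permutations"
begin

definition field_hom :: "('k::field \<Rightarrow> 'l::field) \<Rightarrow> bool" where
  "field_hom f \<longleftrightarrow> f 0 = 0 \<and> f 1 = 1 \<and>
     (\<forall>a b. f (a + b) = f a + f b) \<and> (\<forall>a b. f (a * b) = f a * f b)"

text \<open>tau = sigma p^l, with p the Frobenius x \<mapsto> x^p of L (l may be negative).\<close>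
definition frob_twist :: "('k \<Rightarrow> 'l::field) \<Rightarrow> nat \<Rightarrow> int \<Rightarrow> ('k \<Rightarrow> 'l) \<Rightarrow> bool" where
  "frob_twist \<sigma> p l \<tau> \<longleftrightarrow>
     (if l \<ge> 0 then (\<forall>a. \<tau> a = \<sigma> a ^ (p ^ nat l))
      else (\<forall>a. \<tau> a ^ (p ^ nat (- l)) = \<sigma> a))"

end

theory Submission
  imports Defs "HOL-Computational_Algebra.Primes"
begin

text \<open>For a multiset \<open>C\<close> of homomorphisms \<open>K \<rightarrow> L\<close> write \<open>\<Phi>\<^sub>C(a) = \<Prod>\<phi>\<in>#C. \<phi> a\<close>.
  Expanding \<open>\<Phi>\<^sub>C(a + b)\<close> over all ways of splitting \<open>C = U + V\<close> writes it as a sum of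
  the characters \<open>(a, b) \<mapsto> \<Phi>\<^sub>U(a) \<Phi>\<^sub>V(b)\<close> of the monoid \<open>K \<times> K\<close>. By Dedekind's
  independence of characters and induction on \<open>|C| + |D|\<close>, \<open>\<Phi>\<^sub>C = \<Phi>\<^sub>D\<close> forces \<open>C = D\<close>
  as long as all multiplicities are below the characteristic of \<open>L\<close>: the split
  \<open>({#\<phi>#}, C - {#\<phi>#})\<close> is then the only one with its character and occurs a number of
  times that is nonzero in \<open>L\<close>.

  In characteristic \<open>p\<close>, replacing \<open>p\<close> equal copies of \<open>\<phi>\<close> by the single homomorphism
  \<open>\<phi>\<^sup>p\<close> leaves \<open>\<Phi>\<close> unchanged and lowers the size by \<open>p - 1\<close>. Reducing both sides in this
  way yields the same multiset, and the Frobenius twists together with their bounds are read off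
  from the two reductions. If the larger side is already reduced, so is the smaller one, and the
  two sides coincide.\<close>

lemma characters_linearly_independent:
  fixes F :: "('m \<Rightarrow> 'l::field) set" and mul :: "'m \<Rightarrow> 'm \<Rightarrow> 'm"
  assumes "finite F"
    and "\<forall>\<chi>\<in>F. \<chi> e = 1 \<and> (\<forall>x y. \<chi> (mul x y) = \<chi> x * \<chi> y)"
    and "\<forall>x. (\<Sum>\<chi>\<in>F. c \<chi> * \<chi> x) = 0"
  shows "\<forall>\<chi>\<in>F. c \<chi> = 0"
  using assms
proof (induction F arbitrary: c rule: finite_induct)
  case empty
  then show ?case by simp
next
  case (insert \<psi> F)
  have mult: "\<chi> (mul y x) = \<chi> y * \<chi> x" if "\<chi> \<in> insert \<psi> F" for \<chi> x y
    using insert.prems(1) that by auto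
  have rel: "(\<Sum>\<chi>\<in>F. c \<chi> * \<chi> x) = - (c \<psi> * \<psi> x)" for x
    using insert.prems(2)[rule_format, of x] insert.hyps by (simp add: eq_neg_iff_add_eq_0 add.commute)
  \<comment> \<open>Subtracting \<open>\<psi> y\<close> times the relation from its translate by \<open>y\<close> eliminates \<open>\<psi>\<close>.\<close>
  have shifted: "\<forall>\<chi>\<in>F. c \<chi> * (\<chi> y - \<psi> y) = 0" for y
  proof (rule insert.IH)
    show "\<forall>\<chi>\<in>F. \<chi> e = 1 \<and> (\<forall>x y. \<chi> (mul x y) = \<chi> x * \<chi> y)"
      using insert.prems(1) by auto
    show "\<forall>x. (\<Sum>\<chi>\<in>F. c \<chi> * (\<chi> y - \<psi> y) * \<chi> x) = 0"
    proof
      fix x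
      have "(\<Sum>\<chi>\<in>F. c \<chi> * (\<chi> y - \<psi> y) * \<chi> x)
          = (\<Sum>\<chi>\<in>F. c \<chi> * \<chi> (mul y x)) - \<psi> y * (\<Sum>\<chi>\<in>F. c \<chi> * \<chi> x)"
        by (simp add: mult sum_distrib_left sum_subtractf algebra_simps)
      also have "\<dots> = 0"
        unfolding rel by (simp add: mult)
      finally show "(\<Sum>\<chi>\<in>F. c \<chi> * (\<chi> y - \<psi> y) * \<chi> x) = 0" .
    qed
  qed
  have cF: "\<forall>\<chi>\<in>F. c \<chi> = 0"
  proof
    fix \<chi> assume "\<chi> \<in> F"
    with insert.hyps have "\<chi> \<noteq> \<psi>" by auto
    then obtain y where "\<chi> y \<noteq> \<psi> y" by auto
    with shifted[of y] \<open>\<chi> \<in> F\<close> show "c \<chi> = 0" by auto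
  qed
  moreover have "c \<psi> = 0"
    using rel[of e] cF insert.prems(1) by simp
  ultimately show ?case by simp
qed

lemma sum_mset_image_conv_sum_count:
  assumes "finite A" "set_mset M \<subseteq> A"
  shows "(\<Sum>x\<in>#M. f x) = (\<Sum>x\<in>A. (of_nat (count M x) :: 'b::comm_semiring_1) * f x)"
  using assms(2)
proof (induction M)
  case empty
  then show ?case by simp
next
  case (add a M)
  have "(\<Sum>x\<in>A. (of_nat (count (add_mset a M) x) :: 'b) * f x)
      = (\<Sum>x\<in>A. of_nat (count M x) * f x + (if x = a then f x else 0))"
    by (rule sum.cong) (auto simp: algebra_simps)
  also have "\<dots> = (\<Sum>x\<in>A. of_nat (count M x) * f x) + (\<Sum>x\<in>A. (if x = a then f x else 0))"
    by (rule sum.distrib)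
  also have "(\<Sum>x\<in>A. (if x = a then f x else 0)) = f a"
    using add.prems assms(1) by (simp add: sum.delta')
  finally show ?case using add by (simp add: add.commute)
qed

lemma characters_sum_mset_eq_imp_count_eq:
  fixes Z W :: "('m \<Rightarrow> 'l::field) multiset" and mul :: "'m \<Rightarrow> 'm \<Rightarrow> 'm"
  assumes "\<forall>\<chi>\<in>#Z + W. \<chi> e = 1 \<and> (\<forall>x y. \<chi> (mul x y) = \<chi> x * \<chi> y)"
    and "\<forall>x. (\<Sum>\<chi>\<in>#Z. \<chi> x) = (\<Sum>\<chi>\<in>#W. \<chi> x)"
  shows "(of_nat (count Z \<chi>) :: 'l) = of_nat (count W \<chi>)"
proof -
  let ?A = "set_mset (Z + W)"
  let ?c = "\<lambda>\<chi>. (of_nat (count Z \<chi>) :: 'l) - of_nat (count W \<chi>)"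
  have "\<forall>\<chi>\<in>?A. ?c \<chi> = 0"
  proof (rule characters_linearly_independent[where mul = mul and e = e])
    show "\<forall>x. (\<Sum>\<chi>\<in>?A. ?c \<chi> * \<chi> x) = 0"
      using assms(2) by (simp add: sum_mset_image_conv_sum_count[of ?A] algebra_simps sum_subtractf)
  qed (use assms(1) in auto)
  then show ?thesis
    by (cases "\<chi> \<in> ?A") (auto simp: not_in_iff)
qed

lemma field_hom_0 [simp]: "field_hom f \<Longrightarrow> f 0 = 0"
  and field_hom_1 [simp]: "field_hom f \<Longrightarrow> f 1 = 1"
  and field_hom_add [simp]: "field_hom f \<Longrightarrow> f (a + b) = f a + f b"
  and field_hom_mult [simp]: "field_hom f \<Longrightarrow> f (a * b) = f a * f b"
  by (simp_all add: field_hom_def)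

lemma field_hom_of_nat: "field_hom f \<Longrightarrow> f (of_nat k) = of_nat k"
  by (induction k) simp_all

lemma field_hom_eq_0_iff:
  assumes "field_hom (f :: 'k::field \<Rightarrow> 'l::field)"
  shows "f x = 0 \<longleftrightarrow> x = 0"
proof
  assume "f x = 0"
  show "x = 0"
  proof (rule ccontr)
    assume "x \<noteq> 0"
    then have "f x * f (inverse x) = 1"
      using assms by (metis field_hom_1 field_hom_mult right_inverse)
    with \<open>f x = 0\<close> show False by simp
  qed
qed (use assms in simp)

lemma CHAR_eq_if_field_hom:
  assumes "field_hom (f :: 'k::field \<Rightarrow> 'l::field)"
  shows "CHAR('k) = CHAR('l)"
proof -
  have "(of_nat k :: 'k) = 0 \<longleftrightarrow> (of_nat k :: 'l) = 0" for k
    using field_hom_eq_0_iff[OF assms, of "of_nat k"] field_hom_of_nat[OF assms, of k] by simp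
  then have "CHAR('k) dvd k \<longleftrightarrow> CHAR('l) dvd k" for k
    by (simp add: of_nat_eq_0_iff_char_dvd)
  then show ?thesis
    by (meson dvd_antisym dvd_refl)
qed

definition hom_prod :: "('k \<Rightarrow> 'l::comm_monoid_mult) multiset \<Rightarrow> 'k \<Rightarrow> 'l" where
  "hom_prod C a = (\<Prod>\<phi>\<in>#C. \<phi> a)"

lemma hom_prod_empty [simp]: "hom_prod {#} a = 1"
  and hom_prod_add_mset [simp]: "hom_prod (add_mset \<phi> C) a = \<phi> a * hom_prod C a"
  and hom_prod_union: "hom_prod (A + B) a = hom_prod A a * hom_prod B a"
  by (simp_all add: hom_prod_def)

lemma hom_prod_1: "\<forall>\<phi>\<in>#C. field_hom \<phi> \<Longrightarrow> hom_prod C 1 = 1"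
  by (induction C) simp_all

lemma hom_prod_mult: "\<forall>\<phi>\<in>#C. field_hom \<phi> \<Longrightarrow> hom_prod C (a * b) = hom_prod C a * hom_prod C b"
  by (induction C) (simp_all add: algebra_simps)

lemma hom_prod_0: "\<forall>\<phi>\<in>#C. field_hom \<phi> \<Longrightarrow> C \<noteq> {#} \<Longrightarrow> hom_prod C 0 = 0"
  by (cases C) simp_all

definition char_reduced :: "('k \<Rightarrow> 'l::field) multiset \<Rightarrow> bool" where
  "char_reduced C \<longleftrightarrow> CHAR('l) = 0 \<or> (\<forall>\<phi>. count C \<phi> < CHAR('l))"

lemma char_reduced_subset: "char_reduced C \<Longrightarrow> A \<subseteq># C \<Longrightarrow> char_reduced A"
  unfolding char_reduced_def by (meson le_less_trans mset_subset_eq_count)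

lemma char_reduced_count_nonzero:
  fixes C :: "('k \<Rightarrow> 'l::field) multiset"
  assumes "char_reduced C" "\<phi> \<in># C"
  shows "(of_nat (count C \<phi>) :: 'l) \<noteq> 0"
  using assms unfolding char_reduced_def of_nat_eq_0_iff_char_dvd
  by (metis count_eq_zero_iff dvd_0_left_iff nat_dvd_not_less neq0_conv)

fun splits :: "'a list \<Rightarrow> ('a multiset \<times> 'a multiset) multiset" where
  "splits [] = {#({#}, {#})#}"
| "splits (x # xs) = image_mset (\<lambda>(U, V). (add_mset x U, V)) (splits xs)
      + image_mset (\<lambda>(U, V). (U, add_mset x V)) (splits xs)"

lemma splits_union: "z \<in># splits xs \<Longrightarrow> fst z + snd z = mset xs"
  by (induction xs arbitrary: z) auto

lemma splits_fst_subset: "z \<in># splits xs \<Longrightarrow> fst z \<subseteq># mset xs"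
  and splits_snd_subset: "z \<in># splits xs \<Longrightarrow> snd z \<subseteq># mset xs"
  by (metis splits_union mset_subset_eq_add_left mset_subset_eq_add_right)+

lemma count_image_mset_if_fiber_singleton:
  "(\<And>z. z \<in># M \<Longrightarrow> f z = f t \<Longrightarrow> z = t) \<Longrightarrow> count (image_mset f M) (f t) = count M t"
  by (induction M) auto

lemma count_image_mset_conv_size_filter:
  "count (image_mset f M) y = size (filter_mset (\<lambda>z. f z = y) M)"
  by (induction M) auto

lemma count_splits_empty_fst: "count (splits xs) ({#}, mset xs) = 1"
proof (induction xs)
  case Nil
  then show ?case by simp
next
  case (Cons x xs)
  have "count (image_mset (\<lambda>(U, V). (U, add_mset x V)) (splits xs)) ({#}, add_mset x (mset xs))
      = count (splits xs) ({#}, mset xs)"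
    using count_image_mset_if_fiber_singleton[of "splits xs" "\<lambda>(U, V). (U, add_mset x V)" "({#}, mset xs)"]
    by auto
  with Cons show ?case
    by (auto simp: count_image_mset)
qed

lemma count_splits_singleton_fst:
  "\<phi> \<in> set xs \<Longrightarrow> count (splits xs) ({#\<phi>#}, mset xs - {#\<phi>#}) = count (mset xs) \<phi>"
proof (induction xs)
  case Nil
  then show ?case by simp
next
  case (Cons x xs)
  let ?f1 = "\<lambda>(U, V). (add_mset x U, V)" and ?f2 = "\<lambda>(U, V). (U, add_mset x V)"
  let ?t = "({#\<phi>#}, mset (x # xs) - {#\<phi>#})"
  have inj: "count (image_mset ?f1 M) (?f1 u) = count M u" "count (image_mset ?f2 M) (?f2 u) = count M u"
    for M u
    by (rule count_image_mset_if_fiber_singleton; auto split: prod.splits)+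
  have first: "count (image_mset ?f1 (splits xs)) ?t = (if x = \<phi> then 1 else 0)"
  proof (cases "x = \<phi>")
    case True
    have "count (image_mset ?f1 (splits xs)) (?f1 ({#}, mset xs)) = 1"
      unfolding inj(1) by (rule count_splits_empty_fst)
    with True show ?thesis by simp
  qed (auto simp: count_image_mset)
  have second: "count (image_mset ?f2 (splits xs)) ?t = count (mset xs) \<phi>"
  proof (cases "\<phi> \<in> set xs")
    case True
    then have t: "?t = ?f2 ({#\<phi>#}, mset xs - {#\<phi>#})"
      by (simp add: insert_DiffM2[symmetric])
    show ?thesis
      unfolding t inj(2) using True Cons.IH by simp
  next
    case False
    have "?t \<notin># image_mset ?f2 (splits xs)"
    proof
      assume "?t \<in># image_mset ?f2 (splits xs)"
      then obtain z where "z \<in># splits xs" "fst z = {#\<phi>#}"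
        by (auto split: prod.splits)
      with False show False
        using splits_fst_subset by fastforce
    qed
    with False show ?thesis
      by (metis count_eq_zero_iff set_mset_mset)
  qed
  show ?case
    using first second by simp
qed

lemma hom_prod_add_eq_sum_splits:
  fixes xs :: "('k::semiring_1 \<Rightarrow> 'l::comm_semiring_1) list"
  assumes "\<forall>\<phi>\<in>set xs. \<forall>a b. \<phi> (a + b) = \<phi> a + \<phi> b"
  shows "hom_prod (mset xs) (a + b) = (\<Sum>z\<in>#splits xs. hom_prod (fst z) a * hom_prod (snd z) b)"
  using assms
proof (induction xs)
  case Nil
  then show ?case by simp
next
  case (Cons x xs)
  then have "hom_prod (mset (x # xs)) (a + b)
      = x a * hom_prod (mset xs) (a + b) + x b * hom_prod (mset xs) (a + b)"
    by (simp add: algebra_simps)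
  with Cons show ?case
    by (simp add: sum_mset_distrib_left image_mset.compositionality case_prod_beta comp_def
        algebra_simps)
qed

text \<open>A character of the monoid \<open>'k \<times> 'k\<close> under componentwise multiplication.\<close>
definition split_char :: "('k \<Rightarrow> 'l::comm_monoid_mult) multiset \<times> ('k \<Rightarrow> 'l) multiset \<Rightarrow> 'k \<times> 'k \<Rightarrow> 'l"
  where "split_char z w = hom_prod (fst z) (fst w) * hom_prod (snd z) (snd w)"

lemma split_char_eq_imp_hom_prod_eq:
  fixes U V U' V' :: "('k::field \<Rightarrow> 'l::field) multiset"
  assumes "\<forall>\<phi>\<in>#U + V + U' + V'. field_hom \<phi>" and "split_char (U, V) = split_char (U', V')"
  shows "hom_prod U = hom_prod U'" and "hom_prod V = hom_prod V'"
proof -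
  from assms(1) have ones: "hom_prod U 1 = 1" "hom_prod V 1 = 1" "hom_prod U' 1 = 1" "hom_prod V' 1 = 1"
    by (simp_all add: hom_prod_1)
  show "hom_prod U = hom_prod U'"
    using fun_cong[OF assms(2), of "(a, 1)" for a] by (auto simp: split_char_def ones)
  show "hom_prod V = hom_prod V'"
    using fun_cong[OF assms(2), of "(1, a)" for a] by (auto simp: split_char_def ones)
qed

text \<open>Expanding \<open>\<Prod>\<phi>\<in>#C. \<phi> (a + b)\<close> over all splits of \<open>C\<close> and applying Dedekind's lemma in
  the variables \<open>(a, b)\<close>.\<close>
lemma hom_prod_eq_imp_count_split_char_eq:
  fixes xs ys :: "('k::field \<Rightarrow> 'l::field) list"
  assumes "\<forall>\<phi>\<in>set xs \<union> set ys. field_hom \<phi>" and "hom_prod (mset xs) = hom_prod (mset ys)"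
  shows "(of_nat (count (image_mset split_char (splits xs)) \<chi>) :: 'l)
       = of_nat (count (image_mset split_char (splits ys)) \<chi>)"
proof (rule characters_sum_mset_eq_imp_count_eq
    [where e = "(1, 1)" and mul = "\<lambda>x y. (fst x * fst y, snd x * snd y)"])
  have homs: "(\<forall>\<phi>\<in>#fst z. field_hom \<phi>) \<and> (\<forall>\<phi>\<in>#snd z. field_hom \<phi>)"
    if "z \<in># splits xs + splits ys" for z
  proof -
    from that consider "fst z + snd z = mset xs" | "fst z + snd z = mset ys"
      using splits_union that by (metis union_iff)
    then show ?thesis
      using assms(1) by cases (metis UnCI set_mset_mset union_iff)+
  qed
  show "\<forall>\<chi>\<in>#image_mset split_char (splits xs) + image_mset split_char (splits ys).
      \<chi> (1, 1) = 1 \<and> (\<forall>x y. \<chi> (fst x * fst y, snd x * snd y) = \<chi> x * \<chi> y)"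
  proof
    fix \<chi> assume "\<chi> \<in># image_mset split_char (splits xs) + image_mset split_char (splits ys)"
    then obtain z where "z \<in># splits xs + splits ys" "\<chi> = split_char z"
      by auto
    with homs show "\<chi> (1, 1) = 1 \<and> (\<forall>x y. \<chi> (fst x * fst y, snd x * snd y) = \<chi> x * \<chi> y)"
      by (simp add: split_char_def hom_prod_1 hom_prod_mult algebra_simps)
  qed
  have additive: "\<forall>\<phi>\<in>set zs. \<forall>a b. \<phi> (a + b) = \<phi> a + \<phi> b" if "zs \<in> {xs, ys}" for zs
    using that assms(1) by auto
  show "\<forall>w. (\<Sum>\<chi>\<in>#image_mset split_char (splits xs). \<chi> w) = (\<Sum>\<chi>\<in>#image_mset split_char (splits ys). \<chi> w)"
    using hom_prod_add_eq_sum_splits[OF additive] assms(2)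
    by (simp add: split_char_def image_mset.compositionality comp_def) metis
qed

lemma split_char_eq_imp_components_eq:
  fixes U V U' V' :: "('k::field \<Rightarrow> 'l::field) multiset"
  assumes uniq: "\<And>A B :: ('k \<Rightarrow> 'l) multiset. size A + size B < N \<Longrightarrow>
      \<forall>\<phi>\<in>#A. field_hom \<phi> \<Longrightarrow> \<forall>\<phi>\<in>#B. field_hom \<phi> \<Longrightarrow>
      char_reduced A \<Longrightarrow> char_reduced B \<Longrightarrow> hom_prod A = hom_prod B \<Longrightarrow> A = B"
    and homs: "\<forall>\<phi>\<in>#U + V + U' + V'. field_hom \<phi>"
    and reduced: "char_reduced U" "char_reduced V" "char_reduced U'" "char_reduced V'"
    and eq: "split_char (U, V) = split_char (U', V')"
  shows "size U + size U' < N \<Longrightarrow> U = U'" and "size V + size V' < N \<Longrightarrow> V = V'"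
proof -
  note prods = split_char_eq_imp_hom_prod_eq[OF homs eq]
  show "U = U'" if "size U + size U' < N"
    by (rule uniq[OF that]) (use homs reduced prods in auto)
  show "V = V'" if "size V + size V' < N"
    by (rule uniq[OF that]) (use homs reduced prods in auto)
qed

text \<open>Induction step of the uniqueness theorem below: for \<open>\<phi> \<in># C\<close>, the split
  \<open>({#\<phi>#}, C - {#\<phi>#})\<close> of \<open>C\<close> is, by the induction hypothesis, the only split of \<open>C\<close> with
  its character, so this character occurs \<open>count C \<phi>\<close> times among the splits of \<open>C\<close>, a number
  nonzero in \<open>'l\<close>. Dedekind's lemma then produces the same split of \<open>D\<close>.\<close>
lemma char_reduced_hom_prod_eq_imp_eq_step:
  fixes C D :: "('k::field \<Rightarrow> 'l::field) multiset"
  assumes IH: "\<And>C' D' :: ('k \<Rightarrow> 'l) multiset. size C' + size D' < size C + size D \<Longrightarrow>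
      \<forall>\<phi>\<in>#C'. field_hom \<phi> \<Longrightarrow> \<forall>\<phi>\<in>#D'. field_hom \<phi> \<Longrightarrow>
      char_reduced C' \<Longrightarrow> char_reduced D' \<Longrightarrow> hom_prod C' = hom_prod D' \<Longrightarrow> C' = D'"
    and homs: "\<forall>\<phi>\<in>#C. field_hom \<phi>" "\<forall>\<phi>\<in>#D. field_hom \<phi>"
    and reduced: "char_reduced C" "char_reduced D"
    and eq: "hom_prod C = hom_prod D" and "2 \<le> size C" "D \<noteq> {#}"
  shows "C = D"
proof -
  obtain \<phi> where \<phi>: "\<phi> \<in># C"
    using \<open>2 \<le> size C\<close> by (cases C) auto
  obtain xs ys where xs: "mset xs = C" and ys: "mset ys = D"
    using ex_mset by metis
  define X where "X = split_char ({#\<phi>#}, C - {#\<phi>#})"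
  have "0 < size D"
    using \<open>D \<noteq> {#}\<close> nonempty_has_size by blast
  have size_rest: "size (C - {#\<phi>#}) = size C - 1"
    using \<phi> by (simp add: size_Diff_submset)
  have inherit: "(\<forall>\<psi>\<in>#A. field_hom \<psi>) \<and> char_reduced A" if "A \<subseteq># C \<or> A \<subseteq># D" for A
    using that homs reduced char_reduced_subset by (meson mset_subset_eqD)
  have match: "(size (fst z) + 1 < size C + size D \<longrightarrow> fst z = {#\<phi>#})
      \<and> (size (snd z) + size (C - {#\<phi>#}) < size C + size D \<longrightarrow> snd z = C - {#\<phi>#})"
    if "z \<in># splits xs + splits ys" "split_char z = X" for z
  proof -
    have "(fst z \<subseteq># C \<and> snd z \<subseteq># C) \<or> (fst z \<subseteq># D \<and> snd z \<subseteq># D)"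
      using that(1) xs ys by (metis splits_fst_subset splits_snd_subset union_iff)
    then have parts: "(\<forall>\<psi>\<in>#fst z. field_hom \<psi>) \<and> char_reduced (fst z)"
      "(\<forall>\<psi>\<in>#snd z. field_hom \<psi>) \<and> char_reduced (snd z)"
      using inherit by metis+
    have pieces: "(\<forall>\<psi>\<in>#{#\<phi>#}. field_hom \<psi>) \<and> char_reduced {#\<phi>#}"
      "(\<forall>\<psi>\<in>#C - {#\<phi>#}. field_hom \<psi>) \<and> char_reduced (C - {#\<phi>#})"
      using inherit[of "{#\<phi>#}"] inherit[of "C - {#\<phi>#}"] \<phi> by simp_all
    have "\<forall>\<psi>\<in>#fst z + snd z + {#\<phi>#} + (C - {#\<phi>#}). field_hom \<psi>"
      using parts pieces by auto
    moreover have "split_char (fst z, snd z) = split_char ({#\<phi>#}, C - {#\<phi>#})"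
      using that(2) by (simp add: X_def)
    ultimately have "size (fst z) + size {#\<phi>#} < size C + size D \<Longrightarrow> fst z = {#\<phi>#}"
      "size (snd z) + size (C - {#\<phi>#}) < size C + size D \<Longrightarrow> snd z = C - {#\<phi>#}"
      using parts pieces by (blast intro: split_char_eq_imp_components_eq[OF IH])+
    then show ?thesis
      by simp
  qed
  have unique: "z = ({#\<phi>#}, C - {#\<phi>#})" if z: "z \<in># splits xs" "split_char z = X" for z
  proof -
    from z have match_z: "(size (fst z) + 1 < size C + size D \<longrightarrow> fst z = {#\<phi>#})
      \<and> (size (snd z) + size (C - {#\<phi>#}) < size C + size D \<longrightarrow> snd z = C - {#\<phi>#})"
      by (intro match) simp_all
    have union: "fst z + snd z = C"
      using splits_union[OF z(1)] xs by simp
    have "snd z \<noteq> {#}"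
    proof
      assume empty: "snd z = {#}"
      with match_z size_rest \<open>0 < size D\<close> have "C - {#\<phi>#} = {#}"
        by simp
      with size_rest \<open>2 \<le> size C\<close> show False
        by (metis One_nat_def diff_is_0_eq not_less_eq_eq numeral_2_eq_2 size_empty)
    qed
    then have "0 < size (snd z)"
      using nonempty_has_size by blast
    moreover have "size (fst z) + size (snd z) = size C"
      using union by (metis size_union)
    ultimately have "size (fst z) + 1 < size C + size D"
      using \<open>0 < size D\<close> by linarith
    with match_z union show ?thesis
      by (metis add_diff_cancel_left' prod.collapse)
  qed
  have "count (splits xs) ({#\<phi>#}, C - {#\<phi>#}) = count C \<phi>"
    using count_splits_singleton_fst[of \<phi> xs] \<phi> xs by auto
  with unique have "count (image_mset split_char (splits xs)) X = count C \<phi>"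
    unfolding X_def by (subst count_image_mset_if_fiber_singleton) (auto simp: X_def)
  moreover have "\<forall>\<psi>\<in>set xs \<union> set ys. field_hom \<psi>"
    using homs xs ys by auto
  ultimately have "(of_nat (count (image_mset split_char (splits ys)) X) :: 'l) \<noteq> 0"
    using hom_prod_eq_imp_count_split_char_eq[of xs ys X] eq xs ys
      char_reduced_count_nonzero[OF reduced(1) \<phi>] by auto
  then obtain z where z: "z \<in># splits ys" "split_char z = X"
    by (metis count_eq_zero_iff imageE of_nat_0 set_image_mset)
  have "size (fst z) \<le> size D" "size (snd z) \<le> size D"
    using z(1) ys splits_fst_subset splits_snd_subset by (metis size_mset_mono)+
  then have "size (fst z) + 1 < size C + size D" "size (snd z) + size (C - {#\<phi>#}) < size C + size D"
    using size_rest \<open>2 \<le> size C\<close> by linarith+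
  moreover have "z \<in># splits xs + splits ys"
    using z(1) by simp
  ultimately have "fst z = {#\<phi>#}" "snd z = C - {#\<phi>#}"
    using match[of z] z(2) by blast+
  then show "C = D"
    using splits_union[OF z(1)] ys \<phi> by simp
qed

theorem char_reduced_hom_prod_eq_imp_eq:
  fixes C D :: "('k::field \<Rightarrow> 'l::field) multiset"
  assumes "\<forall>\<phi>\<in>#C. field_hom \<phi>" "\<forall>\<phi>\<in>#D. field_hom \<phi>"
    and "char_reduced C" "char_reduced D" and "hom_prod C = hom_prod D"
  shows "C = D"
  using assms
proof (induction "size C + size D" arbitrary: C D rule: less_induct)
  case less
  have IH: "C' = D'" if "size C' + size D' < size C + size D"
      "\<forall>\<phi>\<in>#C'. field_hom \<phi>" "\<forall>\<phi>\<in>#D'. field_hom \<phi>" "char_reduced C'" "char_reduced D'"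
      "hom_prod C' = hom_prod D'" for C' D' :: "('k \<Rightarrow> 'l) multiset"
    using less.hyps that by blast
  consider "C = {#} \<or> D = {#}" | "2 \<le> size C" "D \<noteq> {#}" | "2 \<le> size D" "C \<noteq> {#}"
    | "size C = 1" "size D = 1"
    by (metis One_nat_def less_2_cases_iff linorder_not_le size_eq_0_iff_empty)
  then show ?case
  proof cases
    case 1
    \<comment> \<open>evaluate at \<open>0\<close>: an empty product is \<open>1\<close>, a nonempty one \<open>0\<close>\<close>
    with less.prems show ?thesis
      using hom_prod_0 by (metis hom_prod_empty zero_neq_one)
  next
    case 2
    with IH less.prems show ?thesis
      by (rule char_reduced_hom_prod_eq_imp_eq_step)
  next
    case 3
    have "D = C"
      by (rule char_reduced_hom_prod_eq_imp_eq_step) (use IH less.prems 3 in \<open>auto simp: add.commute\<close>)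
    then show ?thesis ..
  next
    case 4
    then obtain \<phi> \<psi> where "C = {#\<phi>#}" "D = {#\<psi>#}"
      by (metis size_1_singleton_mset)
    with less.prems show ?thesis
      by (auto simp: fun_eq_iff)
  qed
qed

definition frob_pow :: "nat \<Rightarrow> ('k \<Rightarrow> 'l::field) \<Rightarrow> 'k \<Rightarrow> 'l" where
  "frob_pow l \<phi> a = \<phi> a ^ (CHAR('l) ^ l)"

lemma frob_pow_0 [simp]: "frob_pow 0 \<phi> = \<phi>"
  by (simp add: frob_pow_def fun_eq_iff)

lemma frob_pow_frob_pow_1: "frob_pow l (frob_pow 1 \<phi>) = frob_pow (Suc l) \<phi>"
  by (simp add: frob_pow_def fun_eq_iff power_mult[symmetric] mult.commute)

lemma field_hom_frob_pow:
  assumes "0 < CHAR('l::field)" "field_hom (\<phi> :: 'k::field \<Rightarrow> 'l)"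
  shows "field_hom (frob_pow l \<phi>)"
proof -
  have "prime CHAR('l)"
    using assms(1) by (rule prime_CHAR_semidom)
  with assms show ?thesis
    unfolding field_hom_def frob_pow_def
    by (auto simp: power_mult_distrib freshmans_dream')
qed

lemma power_CHAR_power_inject:
  assumes "0 < CHAR('l::field)" "(u::'l) ^ (CHAR('l) ^ a) = v ^ (CHAR('l) ^ a)"
  shows "u = v"
proof -
  have "prime CHAR('l)"
    using assms(1) by (rule prime_CHAR_semidom)
  then have "((u - v) + v) ^ (CHAR('l) ^ a) = (u - v) ^ (CHAR('l) ^ a) + v ^ (CHAR('l) ^ a)"
    by (rule freshmans_dream') simp
  with assms(2) have "(u - v) ^ (CHAR('l) ^ a) = 0"
    by simp
  then show ?thesis
    by simp
qed

lemma frob_pow_eq_imp_frob_twist: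
  fixes f g :: "'k \<Rightarrow> 'l::field"
  assumes p: "0 < CHAR('l)" and eq: "frob_pow a f = frob_pow b g"
  shows "frob_twist g CHAR('l) (int b - int a) f"
proof -
  let ?p = "CHAR('l)"
  have e: "f x ^ (?p ^ a) = g x ^ (?p ^ b)" for x
    using eq by (metis frob_pow_def)
  show ?thesis
  proof (cases "a \<le> b")
    case True
    have "f x = g x ^ (?p ^ (b - a))" for x
    proof (rule power_CHAR_power_inject[OF p, where a = a])
      have "(g x ^ (?p ^ (b - a))) ^ (?p ^ a) = g x ^ (?p ^ b)"
        using True by (simp add: power_mult[symmetric] power_add[symmetric])
      with e show "f x ^ (?p ^ a) = (g x ^ (?p ^ (b - a))) ^ (?p ^ a)"
        by simp
    qed
    with True show ?thesis
      unfolding frob_twist_def by (simp add: nat_diff_distrib)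
  next
    case False
    have "f x ^ (?p ^ (a - b)) = g x" for x
    proof (rule power_CHAR_power_inject[OF p, where a = b])
      have "(f x ^ (?p ^ (a - b))) ^ (?p ^ b) = f x ^ (?p ^ a)"
        using False by (simp add: power_mult[symmetric] power_add[symmetric])
      with e show "(f x ^ (?p ^ (a - b))) ^ (?p ^ b) = g x ^ (?p ^ b)"
        by simp
    qed
    with False show ?thesis
      unfolding frob_twist_def by (simp add: nat_diff_distrib)
  qed
qed

definition frob_linked :: "nat \<Rightarrow> ('k \<Rightarrow> 'l::field) multiset \<Rightarrow> ('k \<Rightarrow> 'l) multiset \<Rightarrow> bool" where
  "frob_linked k X C \<longleftrightarrow> (\<forall>\<psi>\<in>#C. \<exists>\<phi>\<in>#X. \<exists>l\<le>k. \<psi> = frob_pow l \<phi>)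
     \<and> (\<forall>\<phi>\<in>#X. \<exists>\<psi>\<in>#C. \<exists>l\<le>k. \<psi> = frob_pow l \<phi>)"

lemma frob_linked_refl: "frob_linked 0 X X"
  unfolding frob_linked_def by (metis frob_pow_0 le0)

lemma frob_linked_replicate_CHAR:
  assumes "0 < CHAR('l)" and "frob_linked k (add_mset (frob_pow 1 \<phi>) X) C"
  shows "frob_linked (Suc k) (replicate_mset CHAR('l) (\<phi> :: 'k \<Rightarrow> 'l::field) + X) C"
  unfolding frob_linked_def
proof (intro conjI ballI)
  fix \<psi> assume "\<psi> \<in># C"
  with assms(2) obtain \<phi>' l where \<phi>': "\<phi>' \<in># add_mset (frob_pow 1 \<phi>) X" "l \<le> k" "\<psi> = frob_pow l \<phi>'"
    unfolding frob_linked_def by blast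
  show "\<exists>\<phi>\<in>#replicate_mset CHAR('l) \<phi> + X. \<exists>l\<le>Suc k. \<psi> = frob_pow l \<phi>"
  proof (cases "\<phi>' = frob_pow 1 \<phi>")
    case True
    with \<phi>' assms(1) show ?thesis
      by (metis frob_pow_frob_pow_1 Suc_le_mono in_replicate_mset union_iff neq0_conv)
  next
    case False
    with \<phi>' show ?thesis
      by (metis insert_iff le_SucI set_mset_add_mset_insert union_iff)
  qed
next
  fix \<phi>' assume \<phi>': "\<phi>' \<in># replicate_mset CHAR('l) \<phi> + X"
  show "\<exists>\<psi>\<in>#C. \<exists>l\<le>Suc k. \<psi> = frob_pow l \<phi>'"
  proof (cases "\<phi>' \<in># X")
    case True
    with assms(2) show ?thesis
      unfolding frob_linked_def by (metis le_SucI union_single_eq_member add_mset_add_single union_iff)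
  next
    case False
    with \<phi>' have "\<phi>' = \<phi>"
      by (metis in_replicate_mset union_iff)
    with assms(2) show ?thesis
      unfolding frob_linked_def by (metis frob_pow_frob_pow_1 Suc_le_mono union_single_eq_member)
  qed
qed

text \<open>Replacing \<open>CHAR('l)\<close> copies of \<open>\<phi>\<close> by the single homomorphism \<open>\<phi>\<^sup>p\<close> until all
  multiplicities are below the characteristic.\<close>
lemma exists_char_reduced_frob_linked:
  fixes X :: "('k::field \<Rightarrow> 'l::field) multiset"
  assumes "0 < CHAR('l)" and "\<forall>\<phi>\<in>#X. field_hom \<phi>"
  shows "\<exists>C k. char_reduced C \<and> (\<forall>\<psi>\<in>#C. field_hom \<psi>) \<and> hom_prod C = hom_prod X
     \<and> size C + k * (CHAR('l) - 1) = size X \<and> (char_reduced X \<longleftrightarrow> k = 0) \<and> frob_linked k X C"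
  using assms(2)
proof (induction "size X" arbitrary: X rule: less_induct)
  case less
  let ?p = "CHAR('l)"
  show ?case
  proof (cases "char_reduced X")
    case True
    with less.prems show ?thesis
      using frob_linked_refl by fastforce
  next
    case False
    have "2 \<le> ?p"
      using assms(1) CHAR_not_1'[where 'a = 'l] by linarith
    obtain \<phi> where "?p \<le> count X \<phi>"
      using False unfolding char_reduced_def by (auto simp: not_less)
    then obtain Y where X: "X = replicate_mset ?p \<phi> + Y"
      by (metis count_le_replicate_mset_subset_eq order_refl subset_mset.le_iff_add)
    have "\<phi> \<in># X"
      using X assms(1) by simp
    define X' where "X' = add_mset (frob_pow 1 \<phi>) Y"
    have homs': "\<forall>\<phi>\<in>#X'. field_hom \<phi>"
      using less.prems X \<open>\<phi> \<in># X\<close> field_hom_frob_pow[OF assms(1)] by (auto simp: X'_def)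
    have prod': "hom_prod X' = hom_prod X"
      by (simp add: X'_def X fun_eq_iff hom_prod_union hom_prod_def frob_pow_def)
    have size': "size X' + (?p - 1) = size X"
      using X \<open>2 \<le> ?p\<close> by (simp add: X'_def)
    obtain C k where C: "char_reduced C" "\<forall>\<psi>\<in>#C. field_hom \<psi>" "hom_prod C = hom_prod X'"
        "size C + k * (?p - 1) = size X'" "frob_linked k X' C"
      using less.hyps[OF _ homs'] size' \<open>2 \<le> ?p\<close> by force
    have "frob_linked (Suc k) X C"
      using frob_linked_replicate_CHAR[OF assms(1)] C(5) by (simp add: X X'_def)
    with C False prod' size' show ?thesis
      by (intro exI[of _ C] exI[of _ "Suc k"]) auto
  qed
qed

lemma frob_exponent_bounds:
  fixes a b kA kB c p :: nat
  assumes "a \<le> kA" "b \<le> kB" "1 \<le> c" "2 \<le> p"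
  shows "- (int (c + kA * (p - 1)) - 1) \<le> (int b - int a) * (int p - 1)"
    and "(int b - int a) * (int p - 1) \<le> int (c + kB * (p - 1)) - 1"
proof -
  have "int a * (int p - 1) \<le> int kA * (int p - 1)" "int b * (int p - 1) \<le> int kB * (int p - 1)"
    using assms by (simp_all add: mult_right_mono)
  moreover have "0 \<le> int a * (int p - 1)" "0 \<le> int b * (int p - 1)"
    using assms(4) by simp_all
  moreover have "int (c + kA * (p - 1)) = int c + int kA * (int p - 1)"
    "int (c + kB * (p - 1)) = int c + int kB * (int p - 1)"
    using assms(4) by (simp_all add: of_nat_diff)
  moreover have "(int b - int a) * (int p - 1) = int b * (int p - 1) - int a * (int p - 1)"
    by (simp add: left_diff_distrib)
  ultimately show "- (int (c + kA * (p - 1)) - 1) \<le> (int b - int a) * (int p - 1)"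
    and "(int b - int a) * (int p - 1) \<le> int (c + kB * (p - 1)) - 1"
    using assms(3) by linarith+
qed

definition frob_twists_within :: "nat \<Rightarrow> ('k \<Rightarrow> 'l::field) multiset \<Rightarrow> ('k \<Rightarrow> 'l) multiset \<Rightarrow> bool"
  where "frob_twists_within p S T \<longleftrightarrow> (\<forall>\<psi>\<in>#T. \<exists>\<phi>\<in>#S. \<exists>l::int.
    - (int (size T) - 1) \<le> l * (int p - 1) \<and> l * (int p - 1) \<le> int (size S) - 1 \<and> frob_twist \<phi> p l \<psi>)"

lemma frob_linked_common_imp_frob_twists_within:
  fixes S T C :: "('k \<Rightarrow> 'l::field) multiset"
  assumes "2 \<le> CHAR('l)" "C \<noteq> {#}"
    and S: "frob_linked kS S C" "size C + kS * (CHAR('l) - 1) = size S"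
    and T: "frob_linked kT T C" "size C + kT * (CHAR('l) - 1) = size T"
  shows "frob_twists_within CHAR('l) S T"
  unfolding frob_twists_within_def
proof
  fix \<psi> assume "\<psi> \<in># T"
  then obtain a \<chi> where a: "\<chi> \<in># C" "a \<le> kT" "\<chi> = frob_pow a \<psi>"
    using T(1) unfolding frob_linked_def by blast
  obtain b \<phi> where b: "\<phi> \<in># S" "b \<le> kS" "\<chi> = frob_pow b \<phi>"
    using S(1) a(1) unfolding frob_linked_def by blast
  have "1 \<le> size C"
    using \<open>C \<noteq> {#}\<close> nonempty_has_size by (metis One_nat_def Suc_leI)
  with a b assms(1) S(2) T(2)
  show "\<exists>\<phi>\<in>#S. \<exists>l::int. - (int (size T) - 1) \<le> l * (int CHAR('l) - 1)
      \<and> l * (int CHAR('l) - 1) \<le> int (size S) - 1 \<and> frob_twist \<phi> CHAR('l) l \<psi>"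
    using frob_exponent_bounds[of a kT b kS "size C" "CHAR('l)"]
      frob_pow_eq_imp_frob_twist[of a \<psi> b \<phi>] by auto
qed

theorem hom_prod_eq_cases:
  fixes S T :: "('k::field \<Rightarrow> 'l::field) multiset"
  assumes homs: "\<forall>\<phi>\<in>#S. field_hom \<phi>" "\<forall>\<psi>\<in>#T. field_hom \<psi>"
    and eq: "hom_prod S = hom_prod T" and "T \<noteq> {#}" and "size T \<le> size S"
  shows "S = T \<or> (0 < CHAR('l) \<and> (\<exists>\<phi>. CHAR('l) \<le> count S \<phi>)
    \<and> frob_twists_within CHAR('l) S T \<and> frob_twists_within CHAR('l) T S)"
proof (cases "CHAR('l) = 0")
  case True
  then have "S = T"
    using char_reduced_hom_prod_eq_imp_eq[OF homs] eq by (simp add: char_reduced_def)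
  then show ?thesis ..
next
  case False
  then have "2 \<le> CHAR('l)"
    using CHAR_not_1'[where 'a = 'l] by linarith
  obtain CS kS where CS: "char_reduced CS" "\<forall>\<psi>\<in>#CS. field_hom \<psi>" "hom_prod CS = hom_prod S"
      "size CS + kS * (CHAR('l) - 1) = size S" "char_reduced S \<longleftrightarrow> kS = 0" "frob_linked kS S CS"
    using exists_char_reduced_frob_linked[OF _ homs(1)] False by blast
  obtain CT kT where CT: "char_reduced CT" "\<forall>\<psi>\<in>#CT. field_hom \<psi>" "hom_prod CT = hom_prod T"
      "size CT + kT * (CHAR('l) - 1) = size T" "char_reduced T \<longleftrightarrow> kT = 0" "frob_linked kT T CT"
    using exists_char_reduced_frob_linked[OF _ homs(2)] False by blast
  have "CS = CT"
    using char_reduced_hom_prod_eq_imp_eq[OF CS(2) CT(2) CS(1) CT(1)] CS(3) CT(3) eq by simp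
  show ?thesis
  proof (cases "char_reduced S")
    case True
    \<comment> \<open>then \<open>size T \<le> size S\<close> forces \<open>kT = 0\<close>, so \<open>T\<close> is reduced too\<close>
    with CS(4,5) \<open>CS = CT\<close> have "size CT = size S"
      by simp
    with CT(4) \<open>size T \<le> size S\<close> have "kT * (CHAR('l) - 1) = 0"
      by linarith
    with \<open>2 \<le> CHAR('l)\<close> CT(5) have "char_reduced T"
      by simp
    with True have "S = T"
      using char_reduced_hom_prod_eq_imp_eq[OF homs] eq by simp
    then show ?thesis ..
  next
    case False
    then have "\<exists>\<phi>. CHAR('l) \<le> count S \<phi>"
      unfolding char_reduced_def by (auto simp: not_less)
    moreover have "CT \<noteq> {#}"
      using CT(6) \<open>T \<noteq> {#}\<close> unfolding frob_linked_def by fastforce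
    ultimately show ?thesis
      using frob_linked_common_imp_frob_twists_within[OF \<open>2 \<le> CHAR('l)\<close> \<open>CT \<noteq> {#}\<close>]
        CS(4,6) CT(4,6) \<open>CS = CT\<close> \<open>2 \<le> CHAR('l)\<close> by auto
  qed
qed

lemma count_image_mset_mset_set:
  "finite A \<Longrightarrow> count (image_mset f (mset_set A)) y = card {x \<in> A. f x = y}"
  by (simp only: count_image_mset_conv_size_filter filter_mset_mset_set size_mset_set)

lemma card_le_imp_strict_mono_on_into:
  fixes B :: "nat set"
  assumes "finite B" "p \<le> card B"
  shows "\<exists>idx. strict_mono_on {1..p} idx \<and> idx ` {1..p} \<subseteq> B"
proof -
  define xs where "xs = sorted_list_of_set B"
  have xs: "length xs = card B" "set xs = B" "sorted_wrt (<) xs"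
    using assms(1) by (simp_all add: xs_def strict_sorted_list_of_set)
  show ?thesis
  proof (intro exI[of _ "\<lambda>k. xs ! (k - 1)"] conjI strict_mono_onI subsetI)
    fix r s assume "r \<in> {1..p}" "s \<in> {1..p}" "r < s"
    with xs assms(2) show "xs ! (r - 1) < xs ! (s - 1)"
      using sorted_wrt_nth_less[OF xs(3), of "r - 1" "s - 1"] by auto
  next
    fix x assume "x \<in> (\<lambda>k. xs ! (k - 1)) ` {1..p}"
    with xs assms(2) show "x \<in> B"
      by (auto intro!: nth_mem)
  qed
qed

lemma count_image_mset_ge_imp_strict_mono_on:
  fixes A :: "nat set"
  assumes "finite A" "0 < p" "p \<le> count (image_mset f (mset_set A)) y"
  shows "\<exists>idx. strict_mono_on {1..p} idx \<and> idx ` {1..p} \<subseteq> A \<and> (\<forall>k\<in>{1..p}. f (idx k) = f (idx 1))"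
proof -
  obtain idx where idx: "strict_mono_on {1..p} idx" "idx ` {1..p} \<subseteq> {x \<in> A. f x = y}"
    using assms card_le_imp_strict_mono_on_into[of "{x \<in> A. f x = y}" p]
    by (auto simp: count_image_mset_mset_set)
  moreover from idx(2) have "f (idx k) = y" if "k \<in> {1..p}" for k
    using that by blast
  ultimately show ?thesis
    using \<open>0 < p\<close> by (intro exI[of _ idx] conjI) auto
qed

lemma image_mset_mset_set_atLeastAtMost_eq_imp_permutes:
  fixes n m :: nat
  assumes "image_mset \<sigma> (mset_set {1..n}) = image_mset \<tau> (mset_set {1..m})"
  shows "n = m \<and> (\<exists>g. g permutes {1..n} \<and> (\<forall>i\<in>{1..n}. \<tau> i = \<sigma> (g i)))"
proof
  show "n = m"
    using arg_cong[OF assms, of size] by (simp add: card_atLeastAtMost)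
  with assms show "\<exists>g. g permutes {1..n} \<and> (\<forall>i\<in>{1..n}. \<tau> i = \<sigma> (g i))"
    using image_mset_eq_implies_permutes[of "{1..n}" \<tau> \<sigma>] by auto
qed

lemma frob_twists_within_image_mset_mset_set:
  assumes "frob_twists_within p (image_mset \<sigma> (mset_set A)) (image_mset \<tau> (mset_set B))"
    and "finite A" "finite B"
  shows "\<forall>j\<in>B. \<exists>l::int. \<exists>i\<in>A. - (int (card B) - 1) \<le> l * (int p - 1)
    \<and> l * (int p - 1) \<le> int (card A) - 1 \<and> frob_twist (\<sigma> i) p l (\<tau> j)"
proof
  fix j assume "j \<in> B"
  with assms obtain i l where "i \<in> A" "- (int (card B) - 1) \<le> l * (int p - 1)"
    "l * (int p - 1) \<le> int (card A) - 1" "frob_twist (\<sigma> i) p l (\<tau> j)"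
    unfolding frob_twists_within_def by auto
  then show "\<exists>l::int. \<exists>i\<in>A. - (int (card B) - 1) \<le> l * (int p - 1)
    \<and> l * (int p - 1) \<le> int (card A) - 1 \<and> frob_twist (\<sigma> i) p l (\<tau> j)"
    by blast
qed

theorem theorem1p4:
  fixes \<sigma> \<tau> :: "nat \<Rightarrow> 'k::field \<Rightarrow> 'l::field" and n m :: nat
  assumes "1 \<le> m" and "m \<le> n"
    and "\<forall>i\<in>{1..n}. field_hom (\<sigma> i)"
    and "\<forall>j\<in>{1..m}. field_hom (\<tau> j)"
    and "\<forall>a. (\<Prod>i=1..n. \<sigma> i a) = (\<Prod>j=1..m. \<tau> j a)"
  shows "(n = m \<and> (\<exists>g. g permutes {1..n} \<and> (\<forall>i\<in>{1..n}. \<tau> i = \<sigma> (g i))))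
    \<or> (\<exists>p. p > 0 \<and> CHAR('k) = p \<and> CHAR('l) = p
         \<and> (\<exists>idx :: nat \<Rightarrow> nat. strict_mono_on {1..p} idx \<and> idx ` {1..p} \<subseteq> {1..n}
               \<and> (\<forall>k\<in>{1..p}. \<sigma> (idx k) = \<sigma> (idx 1)))
         \<and> (\<forall>j\<in>{1..m}. \<exists>l::int. \<exists>i\<in>{1..n}.
               - (int m - 1) \<le> l * (int p - 1) \<and> l * (int p - 1) \<le> int n - 1
               \<and> frob_twist (\<sigma> i) p l (\<tau> j))
         \<and> (\<forall>i\<in>{1..n}. \<exists>l::int. \<exists>j\<in>{1..m}.
               - (int n - 1) \<le> l * (int p - 1) \<and> l * (int p - 1) \<le> int m - 1
               \<and> frob_twist (\<tau> j) p l (\<sigma> i)))"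
proof -
  define S where "S = image_mset \<sigma> (mset_set {1..n})"
  define T where "T = image_mset \<tau> (mset_set {1..m})"
  have "\<forall>\<phi>\<in>#S. field_hom \<phi>" "\<forall>\<psi>\<in>#T. field_hom \<psi>"
    using assms(3,4) by (auto simp: S_def T_def)
  moreover have "hom_prod S = hom_prod T"
    using assms(5) by (simp add: S_def T_def fun_eq_iff hom_prod_def prod_unfold_prod_mset
        image_mset.compositionality comp_def)
  moreover have "T \<noteq> {#}" "size T \<le> size S"
    using assms(1,2) by (auto simp: S_def T_def mset_set_empty_iff)
  ultimately have cases: "S = T \<or> (0 < CHAR('l) \<and> (\<exists>\<phi>. CHAR('l) \<le> count S \<phi>)
    \<and> frob_twists_within CHAR('l) S T \<and> frob_twists_within CHAR('l) T S)"
    by (rule hom_prod_eq_cases)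
  show ?thesis
  proof (cases "S = T")
    case True
    then show ?thesis
      unfolding S_def T_def by (intro disjI1 image_mset_mset_set_atLeastAtMost_eq_imp_permutes)
  next
    case False
    with cases obtain \<phi> where "0 < CHAR('l)" "CHAR('l) \<le> count S \<phi>"
      "frob_twists_within CHAR('l) S T" "frob_twists_within CHAR('l) T S"
      by auto
    moreover have "CHAR('k) = CHAR('l)"
      using CHAR_eq_if_field_hom assms(1-3) by force
    ultimately show ?thesis
      unfolding S_def T_def
      using count_image_mset_ge_imp_strict_mono_on[of "{1..n}" "CHAR('l)" \<sigma> \<phi>]
        frob_twists_within_image_mset_mset_set[of "CHAR('l)" \<sigma> "{1..n}" \<tau> "{1..m}"]
        frob_twists_within_image_mset_mset_set[of "CHAR('l)" \<tau> "{1..m}" \<sigma> "{1..n}"]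
      by (intro disjI2 exI[of _ "CHAR('l)"]) simp
  qed
qed

end
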